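(* Let $q$ be a prime power, $k,t$ positive integers, and let $\mathcal{P}=\{P_1,\ldots,P_E\}$ be a partition of $\mathbb{F}_q^k$. For every list of distinct vectors $u_1,\ldots,u_m\in\mathbb{F}_q^k$, $$N\big(\mathcal{D}_{\mathcal{P}}(t;u_1,\ldots,u_m)\big)\;\le\; r_{\mathcal{P}}(k,t)\;\le\; N\big(\mathcal{D}_{\mathcal{P}}(t;P_1,\ldots,P_E)\big).$$ Moreover, if $E\ge 2$, then $r_{\mathcal{P}}(k,t)\ge 2t$.
   Context: $d(\cdot,\cdot)$ denotes Hamming distance. A $(\mathcal{P},t)$-encoding with redundancy $r$ is a systematic map $\mathcal{C}:\mathbb{F}_q^k\to\mathbb{F}_q^{k+r}$, $\mathcal{C}(u)=(u,p(u))$ with $p(u)\in\mathbb{F}_q^r$, such that $d(\mathcal{C}(u),\mathcal{C}(v))\ge 2t+1$ whenever $u,v$ lie in different blocks of $\mathcal{P}$. The optimal redundancy $r_{\mathcal{P}}(k,t)$ is the minimum $r$ for which a $(\mathcal{P},t)$-encoding with redundancy $r$ exists. For distinct $u_1,\ldots,u_M\in\mathbb{F}_q^k$, the partition distance requirement matrix $\mathcal{D}_{\mathcal{P}}(t;u_1,\ldots,u_M)$ is the $M\times M$ matrix with $(i,j)$ entry $\max(2t+1-d(u_i,u_j),0)$ if $u_i,u_j$ lie in different blocks of $\mathcal{P}$ and $0$ otherwise. For blocks, $d(P_i,P_j)=\min_{u\in P_i,v\in P_j}d(u,v)$ for $i\ne j$; the partition distance matrix $\mathcal{D}_{\mathcal{P}}(t;P_1,\ldots,P_E)$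 is the $E\times E$ matrix with $(i,j)$ entry $\max(2t+1-d(P_i,P_j),0)$ for $i\neq j$ and $0$ on the diagonal. For a matrix $D\in\mathbb{N}^{M\times M}$, $N(D)$ is the smallest integer $r\ge 0$ such that there exist $z_1,\ldots,z_M\in\mathbb{F}_q^r$ (not necessarily distinct) with $d(z_i,z_j)\ge D_{i,j}$ for all $i\ne j$ (such a list is called a $D$-code). *)

theory Defs
  imports Main
begin

text \<open>Vectors of F_q^n are lists of length n over a finite field type 'a
(so q = CARD('a), automatically a prime power).\<close>

definition vecs :: "nat \<Rightarrow> 'a list set" where
  "vecs n = {u. length u = n}"

definition hdist :: "'a list \<Rightarrow> 'a list \<Rightarrow> nat" where
  "hdist u v = card {i. i < length u \<and> i < length v \<and> u ! i \<noteq> v ! i}"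

definition is_partition :: "'a set \<Rightarrow> 'a set list \<Rightarrow> bool" where
  "is_partition V Ps \<longleftrightarrow> distinct Ps \<and> (\<forall>B\<in>set Ps. B \<noteq> {})
     \<and> (\<forall>i<length Ps. \<forall>j<length Ps. i \<noteq> j \<longrightarrow> Ps ! i \<inter> Ps ! j = {})
     \<and> \<Union>(set Ps) = V"

definition same_block :: "'a set list \<Rightarrow> 'a \<Rightarrow> 'a \<Rightarrow> bool" where
  "same_block Ps u v \<longleftrightarrow> (\<exists>B\<in>set Ps. u \<in> B \<and> v \<in> B)"

text \<open>(P,t)-encoding with redundancy r: C(u) = (u, p u), p u of length r.\<close>
definition is_encoding :: "'a list set list \<Rightarrow> nat \<Rightarrow> nat \<Rightarrow> nat \<Rightarrow> ('a list \<Rightarrow> 'a list) \<Rightarrow> bool" where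
  "is_encoding Ps k t r p \<longleftrightarrow> (\<forall>u\<in>vecs k. length (p u) = r)
     \<and> (\<forall>u\<in>vecs k. \<forall>v\<in>vecs k. \<not> same_block Ps u v \<longrightarrow> hdist (u @ p u) (v @ p v) \<ge> 2*t+1)"

definition r_opt :: "'a list set list \<Rightarrow> nat \<Rightarrow> nat \<Rightarrow> nat" where
  "r_opt Ps k t = (LEAST r. \<exists>p. is_encoding Ps k t r p)"

text \<open>N(D) for an M x M matrix D (indices 0..M-1), codes over the field 'a.\<close>
definition N_req :: "'a itself \<Rightarrow> nat \<Rightarrow> (nat \<Rightarrow> nat \<Rightarrow> nat) \<Rightarrow> nat" where
  "N_req _ M D = (LEAST r. \<exists>z :: nat \<Rightarrow> 'a list. (\<forall>i<M. z i \<in> vecs r)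
      \<and> (\<forall>i<M. \<forall>j<M. i \<noteq> j \<longrightarrow> hdist (z i) (z j) \<ge> D i j))"

text \<open>Partition distance requirement matrix; nat subtraction is max(.,0).\<close>
definition req_matrix :: "'a list set list \<Rightarrow> nat \<Rightarrow> 'a list list \<Rightarrow> nat \<Rightarrow> nat \<Rightarrow> nat" where
  "req_matrix Ps t us i j =
     (if \<not> same_block Ps (us ! i) (us ! j) then (2*t+1) - hdist (us ! i) (us ! j) else 0)"

definition block_dist :: "'a list set \<Rightarrow> 'a list set \<Rightarrow> nat" where
  "block_dist B C = Min {hdist u v | u v. u \<in> B \<and> v \<in> C}"

definition block_matrix :: "'a list set list \<Rightarrow> nat \<Rightarrow> nat \<Rightarrow> nat \<Rightarrow> nat" where
  "block_matrix Ps t i j = (if i \<noteq> j then (2*t+1) - block_dist (Ps ! i) (Ps ! j) else 0)"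

end

theory Submission
  imports Defs
begin

text \<open>Restricting an optimal encoding to u_1, ..., u_m, its parity parts must supply the distance
  that the u_i lack, so they form a code for the requirement matrix. Conversely, giving every vector
  the codeword of its block in a code for the block matrix is an encoding, since
  d(u, v) \<ge> d(P_i, P_j) for u \<in> P_i and v \<in> P_j. Finally, the Hamming graph on F_q^k is
  connected, so with two or more blocks some adjacent vectors u, v lie in different blocks, and then
  their parities must differ in at least 2t positions. None of this needs k > 0, t > 0 or the
  distinctness of the u_i.\<close>

lemma hdist_conv_filter_zip:
  "hdist u v = length (filter (\<lambda>(x, y). x \<noteq> y) (zip u v))"
  unfolding hdist_def length_filter_conv_card by (auto intro: arg_cong[where f = card])

lemma hdist_le_length: "hdist u v \<le> length u"
  unfolding hdist_conv_filter_zip by (metis length_filter_le length_zip min.bounded_iff)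

lemma hdist_append:
  assumes "length u = length v"
  shows "hdist (u @ x) (v @ y) = hdist u v + hdist x y"
  using assms by (simp add: hdist_conv_filter_zip)

lemma hdist_list_update_le: "hdist xs (xs[j := x]) \<le> 1"
proof -
  have "{i. i < length xs \<and> i < length (xs[j := x]) \<and> xs ! i \<noteq> xs[j := x] ! i} \<subseteq> {j}"
    using nth_list_update_neq[of j _ xs x] by fastforce
  from card_mono[OF _ this] show ?thesis unfolding hdist_def by simp
qed

lemma vecs_unit_step_induct:
  assumes "a \<in> vecs k" "b \<in> vecs k" "P a"
    and step: "\<And>u v. u \<in> vecs k \<Longrightarrow> v \<in> vecs k \<Longrightarrow> hdist u v \<le> 1 \<Longrightarrow> P u \<Longrightarrow> P v"
  shows "P b"
proof -
  have "P (take j b @ drop j a)" if "j \<le> k" for j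
    using that
  proof (induction j)
    case 0
    then show ?case using \<open>P a\<close> by simp
  next
    case (Suc j)
    let ?w = "take j b @ drop j a"
    have "take (Suc j) b @ drop (Suc j) a = ?w[j := b ! j]"
      using assms(1,2) Suc.prems
      by (intro nth_equalityI) (auto simp: vecs_def nth_append nth_list_update)
    moreover have "?w \<in> vecs k" "?w[j := b ! j] \<in> vecs k"
      using assms(1,2) Suc.prems by (auto simp: vecs_def)
    ultimately show ?case
      using step hdist_list_update_le Suc by (metis Suc_leD)
  qed
  from this[of k] show ?thesis using assms(1,2) by (simp add: vecs_def)
qed

lemma partition_block_index:
  assumes "is_partition V Ps" "u \<in> V"
  obtains i where "i < length Ps" "u \<in> Ps ! i"
  using assms unfolding is_partition_def by (metis UnionE in_set_conv_nth)

lemma partition_block_subset: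
  assumes "is_partition V Ps" "i < length Ps"
  shows "Ps ! i \<subseteq> V"
  using assms unfolding is_partition_def by (metis Union_upper nth_mem)

lemma partition_block_unique:
  assumes "is_partition V Ps" "i < length Ps" "j < length Ps" "u \<in> Ps ! i" "u \<in> Ps ! j"
  shows "i = j"
  using assms unfolding is_partition_def by blast

lemma same_block_refl:
  assumes "is_partition V Ps" "u \<in> V"
  shows "same_block Ps u u"
  using assms by (metis partition_block_index nth_mem same_block_def)

lemma same_block_trans:
  assumes "is_partition V Ps" "same_block Ps u v" "same_block Ps v w"
  shows "same_block Ps u w"
  using assms partition_block_unique[OF assms(1)] unfolding same_block_def
  by (metis in_set_conv_nth)

lemma partition_ex_not_same_block:
  assumes "is_partition V Ps" "2 \<le> length Ps"
  shows "\<exists>a\<in>V. \<exists>b\<in>V. \<not> same_block Ps a b"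
proof -
  have len: "0 < length Ps" "1 < length Ps"
    using assms(2) by linarith+
  then have "Ps ! 0 \<noteq> {}" "Ps ! 1 \<noteq> {}"
    using assms(1) unfolding is_partition_def by (meson nth_mem)+
  then obtain a b where a: "a \<in> Ps ! 0" and b: "b \<in> Ps ! 1" by blast
  have "\<not> same_block Ps a b"
  proof
    assume "same_block Ps a b"
    then obtain m where m: "m < length Ps" "a \<in> Ps ! m" "b \<in> Ps ! m"
      unfolding same_block_def by (metis in_set_conv_nth)
    then have "m = 0" "m = 1"
      using partition_block_unique[OF assms(1)] len a b by metis+
    then show False by simp
  qed
  moreover have "a \<in> V" "b \<in> V"
    using a b len partition_block_subset[OF assms(1)] by auto
  ultimately show ?thesis by blast
qed

lemma partition_adjacent_across_blocks:
  assumes "is_partition (vecs k) Ps" "2 \<le> length Ps"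
  shows "\<exists>u\<in>vecs k. \<exists>v\<in>vecs k. \<not> same_block Ps u v \<and> hdist u v \<le> 1"
proof (rule ccontr)
  assume no_adjacent: "\<not> ?thesis"
  obtain a b where "a \<in> vecs k" "b \<in> vecs k" "\<not> same_block Ps a b"
    using partition_ex_not_same_block[OF assms] by blast
  moreover have "same_block Ps a b"
    using \<open>a \<in> vecs k\<close> \<open>b \<in> vecs k\<close> same_block_refl[OF assms(1) \<open>a \<in> vecs k\<close>]
  proof (rule vecs_unit_step_induct)
    show "same_block Ps a v"
      if "u \<in> vecs k" "v \<in> vecs k" "hdist u v \<le> 1" "same_block Ps a u" for u v
      using that no_adjacent same_block_trans[OF assms(1)] by blast
  qed
  ultimately show False by blast
qed

lemma block_dist_le_hdist:
  assumes "B \<subseteq> vecs k" "u \<in> B" "v \<in> C"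
  shows "block_dist B C \<le> hdist u v"
proof -
  have "{hdist u v | u v. u \<in> B \<and> v \<in> C} \<subseteq> {..k}"
    using assms(1) hdist_le_length by (fastforce simp: vecs_def)
  then show ?thesis
    unfolding block_dist_def using assms(2,3) by (blast intro: Min_le finite_subset)
qed

definition is_D_code :: "nat \<Rightarrow> (nat \<Rightarrow> nat \<Rightarrow> nat) \<Rightarrow> nat \<Rightarrow> (nat \<Rightarrow> 'a list) \<Rightarrow> bool" where
  "is_D_code M D r z \<longleftrightarrow> (\<forall>i<M. z i \<in> vecs r) \<and> (\<forall>i<M. \<forall>j<M. i \<noteq> j \<longrightarrow> D i j \<le> hdist (z i) (z j))"

lemma N_req_eq_Least:
  "N_req TYPE('a) M D = (LEAST r. \<exists>z :: nat \<Rightarrow> 'a list. is_D_code M D r z)"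
  by (simp add: N_req_def is_D_code_def)

lemma N_req_le:
  fixes z :: "nat \<Rightarrow> 'a list"
  assumes "is_D_code M D r z"
  shows "N_req TYPE('a) M D \<le> r"
  unfolding N_req_eq_Least using assms by (blast intro: Least_le)

text \<open>Codeword i is the indicator of the i-th segment of length c, so distinct codewords differ
  in at least c positions.\<close>

lemma D_code_exists_bounded:
  assumes "\<And>i j. i < M \<Longrightarrow> j < M \<Longrightarrow> D i j \<le> c"
  shows "\<exists>z :: nat \<Rightarrow> 'a::zero_neq_one list. is_D_code M D (M * c) z"
proof -
  define z :: "nat \<Rightarrow> 'a list" where
    "z i = map (\<lambda>p. if p div c = i then 1 else 0) [0..<M * c]" for i
  have "D i j \<le> hdist (z i) (z j)" if "i < M" "j < M" "i \<noteq> j" for i j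
  proof -
    have "i * c + c \<le> M * c"
      using that(1) by (metis Suc_leI add.commute mult_Suc mult_le_mono1)
    then have "{i * c..<i * c + c} \<subseteq> {p. p < length (z i) \<and> p < length (z j) \<and> z i ! p \<noteq> z j ! p}"
      using that(3) by (auto simp: z_def div_nat_eqI mult.commute)
    from card_mono[OF _ this] have "c \<le> hdist (z i) (z j)"
      unfolding hdist_def by simp
    then show ?thesis using assms[OF that(1,2)] by linarith
  qed
  then have "is_D_code M D (M * c) z"
    by (simp add: is_D_code_def z_def vecs_def)
  then show ?thesis by blast
qed

lemma N_req_D_code:
  "\<exists>z :: nat \<Rightarrow> 'a::zero_neq_one list. is_D_code M D (N_req TYPE('a) M D) z"
proof -
  let ?c = "Max ((\<lambda>(i, j). D i j) ` ({..<M} \<times> {..<M}))"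
  have "D i j \<le> ?c" if "i < M" "j < M" for i j
    using that by (intro Max_ge finite_imageI) (auto intro: rev_image_eqI[of "(i, j)"])
  then obtain z :: "nat \<Rightarrow> 'a list" where z: "is_D_code M D (M * ?c) z"
    using D_code_exists_bounded by blast
  show ?thesis
    unfolding N_req_eq_Least by (rule LeastI_ex) (use z in blast)
qed

lemma r_opt_le:
  assumes "is_encoding Ps k t r p"
  shows "r_opt Ps k t \<le> r"
  unfolding r_opt_def using assms by (blast intro: Least_le)

lemma r_opt_encoding:
  assumes "is_encoding Ps k t r p"
  shows "\<exists>p. is_encoding Ps k t (r_opt Ps k t) p"
  unfolding r_opt_def by (rule LeastI_ex) (use assms in blast)

lemma encoding_of_block_code:
  fixes Ps :: "'a list set list" and z :: "nat \<Rightarrow> 'a list"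
  assumes part: "is_partition (vecs k) Ps"
    and code: "is_D_code (length Ps) (block_matrix Ps t) r z"
  shows "\<exists>p. is_encoding Ps k t r p"
proof -
  define blk where "blk u = (SOME i. i < length Ps \<and> u \<in> Ps ! i)" for u
  have blk: "blk u < length Ps" "u \<in> Ps ! blk u" if "u \<in> vecs k" for u
    unfolding blk_def using partition_block_index[OF part that] by (metis (mono_tags) someI)+
  have "is_encoding Ps k t r (z \<circ> blk)"
    unfolding is_encoding_def
  proof (intro conjI ballI impI)
    show "length ((z \<circ> blk) u) = r" if "u \<in> vecs k" for u
      using blk[OF that] code by (simp add: is_D_code_def vecs_def)
  next
    fix u v assume u: "u \<in> vecs k" and v: "v \<in> vecs k" and "\<not> same_block Ps u v"
    then have ne: "blk u \<noteq> blk v"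
      using blk unfolding same_block_def by (metis nth_mem)
    have "2 * t + 1 - hdist u v \<le> 2 * t + 1 - block_dist (Ps ! blk u) (Ps ! blk v)"
      using block_dist_le_hdist[OF partition_block_subset[OF part blk(1)[OF u]] blk(2)[OF u]
          blk(2)[OF v]]
      by (rule diff_le_mono2)
    also have "\<dots> \<le> hdist (z (blk u)) (z (blk v))"
      using code blk u v ne by (auto simp: is_D_code_def block_matrix_def)
    finally have "2 * t + 1 \<le> hdist u v + hdist (z (blk u)) (z (blk v))"
      by linarith
    also have "\<dots> = hdist (u @ (z \<circ> blk) u) (v @ (z \<circ> blk) v)"
      using u v by (simp add: hdist_append vecs_def)
    finally show "2 * t + 1 \<le> hdist (u @ (z \<circ> blk) u) (v @ (z \<circ> blk) v)" .
  qed
  then show ?thesis by blast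
qed

lemma req_code_of_encoding:
  assumes enc: "is_encoding Ps k t r p" and us: "set us \<subseteq> vecs k"
  shows "is_D_code (length us) (req_matrix Ps t us) r (\<lambda>i. p (us ! i))"
  unfolding is_D_code_def
proof (intro conjI allI impI)
  fix i assume "i < length us"
  then have "us ! i \<in> vecs k"
    using us by auto
  then show "p (us ! i) \<in> vecs r"
    using enc by (simp add: is_encoding_def vecs_def)
next
  fix i j assume "i < length us" "j < length us" "i \<noteq> j"
  then have ui: "us ! i \<in> vecs k" and uj: "us ! j \<in> vecs k"
    using us by auto
  have "\<not> same_block Ps (us ! i) (us ! j) \<Longrightarrow>
      2 * t + 1 \<le> hdist (us ! i) (us ! j) + hdist (p (us ! i)) (p (us ! j))"
    using enc ui uj by (simp add: is_encoding_def hdist_append vecs_def)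
  then show "req_matrix Ps t us i j \<le> hdist (p (us ! i)) (p (us ! j))"
    by (auto simp: req_matrix_def)
qed

lemma encoding_redundancy_ge:
  assumes enc: "is_encoding Ps k t r p"
    and "u \<in> vecs k" "v \<in> vecs k" "\<not> same_block Ps u v" "hdist u v \<le> 1"
  shows "2 * t \<le> r"
proof -
  have "2 * t + 1 \<le> hdist u v + hdist (p u) (p v)"
    using assms by (simp add: is_encoding_def hdist_append vecs_def)
  moreover have "hdist (p u) (p v) \<le> r"
    using enc assms(2) hdist_le_length[of "p u" "p v"] by (simp add: is_encoding_def)
  ultimately show ?thesis
    using assms(5) by linarith
qed

theorem theorem2:
  fixes Ps :: "('a::{finite,field}) list set list" and k t :: nat
  assumes "k > 0" and "t > 0" and "is_partition (vecs k) Ps"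
  shows "(\<forall>us. distinct us \<and> set us \<subseteq> vecs k \<longrightarrow>
            N_req TYPE('a) (length us) (req_matrix Ps t us) \<le> r_opt Ps k t)
       \<and> r_opt Ps k t \<le> N_req TYPE('a) (length Ps) (block_matrix Ps t)
       \<and> (length Ps \<ge> 2 \<longrightarrow> r_opt Ps k t \<ge> 2*t)"
proof -
  note part = assms(3)
  obtain z :: "nat \<Rightarrow> 'a list"
    where "is_D_code (length Ps) (block_matrix Ps t) (N_req TYPE('a) (length Ps) (block_matrix Ps t)) z"
    using N_req_D_code by blast
  then obtain p0 where enc0: "is_encoding Ps k t (N_req TYPE('a) (length Ps) (block_matrix Ps t)) p0"
    using encoding_of_block_code[OF part] by blast
  then have upper: "r_opt Ps k t \<le> N_req TYPE('a) (length Ps) (block_matrix Ps t)"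
    by (rule r_opt_le)
  obtain p where enc: "is_encoding Ps k t (r_opt Ps k t) p"
    using r_opt_encoding[OF enc0] by blast
  have lower: "N_req TYPE('a) (length us) (req_matrix Ps t us) \<le> r_opt Ps k t"
    if "set us \<subseteq> vecs k" for us
    using N_req_le req_code_of_encoding[OF enc that] by blast
  have "2 * t \<le> r_opt Ps k t" if "2 \<le> length Ps"
    using partition_adjacent_across_blocks[OF part that] encoding_redundancy_ge[OF enc] by blast
  then show ?thesis
    using lower upper by blast
qed

end
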